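(* If the Markov chain $\mathcal{M}$ is started from a connected configuration with no holes, then it never reaches a configuration with a hole.
   Context: Let $\Gamma$ be the triangular lattice; a configuration is a finite set of occupied vertices ("locations") of $\Gamma$, each occupied by one particle; it is connected if the subgraph induced by occupied locations is connected. A hole is a maximal finite connected set of unoccupied locations. For a location $\ell$, $N(\ell)$ is the set of particles at locations adjacent to $\ell$. For adjacent $\ell,\ell'$, let $\mathbb{S}=N(\ell)\cap N(\ell')$ and $N(\ell\cup\ell')=(N(\ell)\cup N(\ell'))$ minus particles located at $\ell$ or $\ell'$. Property 1: $|\mathbb{S}|\in\{1,2\}$ and every particle in $N(\ell\cup\ell')$ is connected to a particle of $\mathbb{S}$ by a lattice path all of whose vertices are particles of $N(\ell\cup\ell')$. Property 2: $|\mathbb{S}|=0$; each of $\ell,\ell'$ has at least one adjacent particle other than one located at the other location; the particles of $N(\ell)$ not at $\ell'$ are connected by paths within this set; the particles of $N(\ell')$ not at $\ell$ are connected by paths within this set. One step of $\mathcal{M}$ (bias $\lambda>0$) from $\sigma$: choose a particle $P$ uniformly (location $\ell$), a neighbor $\ell'$ of $\ell$ uniformly among six, and $q$ uniform in $(0,1)$. If $\ell'$ is occupied, do nothing. Otherwise let $t$ (resp. $t'$) be the number of triangular faces incident to $\ell$ (resp. $\ell'$) with all three vertices occupied when $P$ is at $\ell$ (resp. at $\ell'$); move $P$ to $\ell'$ if (1) $\ell$ does not have exactly five occupied neighbors, (2) $\ell,\ell'$ satisfy Property 1 or 2, and (3) $q<\lambda^{t'-t}$; else do nothing. *)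

theory Defs
  imports Complex_Main
begin

text \<open>Triangular lattice: vertices are int x int (axial coordinates); the six
neighbours of (x,y) are (x+-1,y), (x,y+-1), (x+1,y-1), (x-1,y+1).\<close>

type_synonym loc = "int \<times> int"

definition adj :: "loc \<Rightarrow> loc \<Rightarrow> bool" where
  "adj p q \<longleftrightarrow> (let dx = fst q - fst p; dy = snd q - snd p in
     (dx, dy) \<in> {(1,0), (-1,0), (0,1), (0,-1), (1,-1), (-1,1)})"

definition faces :: "loc set set" where
  "faces = {{(x,y), (x+1,y), (x,y+1)} | x y. True} \<union>
           {{(x+1,y), (x,y+1), (x+1,y+1)} | x y. True}"

definition path_in :: "loc set \<Rightarrow> loc \<Rightarrow> loc \<Rightarrow> bool" where
  "path_in A u v \<longleftrightarrow> u \<in> A \<and> (\<lambda>a b. adj a b \<and> a \<in> A \<and> b \<in> A)\<^sup>*\<^sup>* u v"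

definition set_connected :: "loc set \<Rightarrow> bool" where
  "set_connected A \<longleftrightarrow> (\<forall>u\<in>A. \<forall>v\<in>A. path_in A u v)"

definition is_hole :: "loc set \<Rightarrow> loc set \<Rightarrow> bool" where
  "is_hole \<sigma> H \<longleftrightarrow> H \<noteq> {} \<and> finite H \<and> H \<inter> \<sigma> = {} \<and> set_connected H \<and>
     (\<forall>H'. H \<subseteq> H' \<and> finite H' \<and> H' \<inter> \<sigma> = {} \<and> set_connected H' \<longrightarrow> H' = H)"

definition has_hole :: "loc set \<Rightarrow> bool" where
  "has_hole \<sigma> \<longleftrightarrow> (\<exists>H. is_hole \<sigma> H)"

definition nbrs :: "loc set \<Rightarrow> loc \<Rightarrow> loc set" where
  "nbrs \<sigma> l = {p \<in> \<sigma>. adj l p}"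

definition common_nbrs :: "loc set \<Rightarrow> loc \<Rightarrow> loc \<Rightarrow> loc set" where
  "common_nbrs \<sigma> l l' = nbrs \<sigma> l \<inter> nbrs \<sigma> l'"

definition nbrs2 :: "loc set \<Rightarrow> loc \<Rightarrow> loc \<Rightarrow> loc set" where
  "nbrs2 \<sigma> l l' = (nbrs \<sigma> l \<union> nbrs \<sigma> l') - {l, l'}"

definition property1 :: "loc set \<Rightarrow> loc \<Rightarrow> loc \<Rightarrow> bool" where
  "property1 \<sigma> l l' \<longleftrightarrow> card (common_nbrs \<sigma> l l') \<in> {1, 2} \<and>
     (\<forall>p \<in> nbrs2 \<sigma> l l'. \<exists>s \<in> common_nbrs \<sigma> l l'. path_in (nbrs2 \<sigma> l l') p s)"

definition property2 :: "loc set \<Rightarrow> loc \<Rightarrow> loc \<Rightarrow> bool" where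
  "property2 \<sigma> l l' \<longleftrightarrow> card (common_nbrs \<sigma> l l') = 0 \<and>
     nbrs \<sigma> l - {l'} \<noteq> {} \<and> nbrs \<sigma> l' - {l} \<noteq> {} \<and>
     set_connected (nbrs \<sigma> l - {l'}) \<and> set_connected (nbrs \<sigma> l' - {l})"

definition tri_count :: "loc set \<Rightarrow> loc \<Rightarrow> nat" where
  "tri_count \<sigma> l = card {T \<in> faces. l \<in> T \<and> T \<subseteq> \<sigma>}"

text \<open>One transition of M with positive probability: a particle at l moves to
an adjacent empty l', for some choice of q in (0,1) satisfying the Metropolis test.\<close>
definition move :: "real \<Rightarrow> loc set \<Rightarrow> loc set \<Rightarrow> bool" where
  "move lam \<sigma> \<sigma>' \<longleftrightarrow> (\<exists>l l'. l \<in> \<sigma> \<and> adj l l' \<and> l' \<notin> \<sigma> \<and>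
     card (nbrs \<sigma> l) \<noteq> 5 \<and>
     (property1 \<sigma> l l' \<or> property2 \<sigma> l l') \<and>
     \<sigma>' = insert l' (\<sigma> - {l}) \<and>
     (\<exists>q::real. 0 < q \<and> q < 1 \<and>
        q < lam powr (real_of_int (int (tri_count \<sigma>' l') - int (tri_count \<sigma> l)))))"

end

theory Submission
  imports Defs
begin

text \<open>A configuration has no hole exactly when every empty location lies in an infinite
  component of the complement. Suppose a particle moves from \<open>l\<close> to \<open>l'\<close>. Since \<open>l'\<close> lay in an
  infinite empty component, one of its empty neighbours lies in an infinite component that avoids
  \<open>l'\<close>. Property 1 or 2 guarantees that all empty neighbours of \<open>l'\<close> stay connected in the new
  complement, either along the ring of neighbours of \<open>l'\<close> or through the vacated site \<open>l\<close>; hence all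
  of them still reach infinity. Every other empty location either reaches one of them or never
  used \<open>l'\<close>, and \<open>l\<close> itself has an empty neighbour other than \<open>l'\<close> because it did not have exactly
  five occupied neighbours.\<close>

lemma adj_sym: "adj p q \<Longrightarrow> adj q p"
  by (cases p; cases q) (auto simp: adj_def Let_def)

lemma adj_irrefl: "\<not> adj p p"
  by (cases p) (auto simp: adj_def Let_def)

lemma adj_iff:
  "adj (a, b) w \<longleftrightarrow> w \<in> {(a+1,b), (a-1,b), (a,b+1), (a,b-1), (a+1,b-1), (a-1,b+1)}"
  by (cases w) (auto simp: adj_def Let_def)

lemma finite_adj: "finite {w. adj p w}"
  by (cases p) (simp add: adj_iff)

lemma card_adj: "card {w. adj p w} = 6"
  by (cases p) (simp only: adj_iff Collect_mem_eq, simp)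

lemma empty_nbr_if_card_nbrs_ne_5:
  assumes "card (nbrs \<sigma> l) \<noteq> 5" "adj l l'" "l' \<notin> \<sigma>"
  shows "\<exists>g. adj l g \<and> g \<noteq> l' \<and> g \<notin> \<sigma>"
proof (rule ccontr)
  assume "\<nexists>g. adj l g \<and> g \<noteq> l' \<and> g \<notin> \<sigma>"
  then have "nbrs \<sigma> l = {w. adj l w} - {l'}"
    using assms(3) by (auto simp: nbrs_def)
  then have "card (nbrs \<sigma> l) = 5"
    using assms(2) finite_adj card_adj by simp
  with assms(1) show False ..
qed

subsection \<open>Paths and components\<close>

lemma path_in_refl: "u \<in> A \<Longrightarrow> path_in A u u"
  by (simp add: path_in_def)

lemma path_in_end: "path_in A u v \<Longrightarrow> v \<in> A"
proof -
  assume "path_in A u v"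
  then have "(\<lambda>a b. adj a b \<and> a \<in> A \<and> b \<in> A)\<^sup>*\<^sup>* u v" "u \<in> A"
    unfolding path_in_def by auto
  then show ?thesis by (induction rule: rtranclp_induct) auto
qed

lemma path_in_step: "path_in A u v \<Longrightarrow> adj v w \<Longrightarrow> w \<in> A \<Longrightarrow> path_in A u w"
  using path_in_end[of A u v] unfolding path_in_def
  by (auto intro: rtranclp.rtrancl_into_rtrancl)

lemma path_in_induct [consumes 1, case_names base step]:
  assumes "path_in A u w"
    and "u \<in> A \<Longrightarrow> P u"
    and "\<And>y z. path_in A u y \<Longrightarrow> adj y z \<Longrightarrow> z \<in> A \<Longrightarrow> P y \<Longrightarrow> P z"
  shows "P w"
proof -
  have "(\<lambda>a b. adj a b \<and> a \<in> A \<and> b \<in> A)\<^sup>*\<^sup>* u w" "u \<in> A"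
    using assms(1) unfolding path_in_def by auto
  then show ?thesis
  proof (induction rule: rtranclp_induct)
    case (step y z)
    then show ?case using assms(3) unfolding path_in_def by blast
  qed (rule assms(2))
qed

lemma path_in_trans: "path_in A u v \<Longrightarrow> path_in A v w \<Longrightarrow> path_in A u w"
  unfolding path_in_def by auto

lemma path_in_adj: "adj u v \<Longrightarrow> u \<in> A \<Longrightarrow> v \<in> A \<Longrightarrow> path_in A u v"
  using path_in_step path_in_refl by blast

lemma path_in_sym: "path_in A u v \<Longrightarrow> path_in A v u"
proof (induction rule: path_in_induct)
  case base
  then show ?case by (rule path_in_refl)
next
  case (step y z)
  then have "path_in A z y"
    using path_in_end by (blast intro: path_in_adj adj_sym)
  from this step(4) show ?case by (rule path_in_trans)
qed

lemma path_in_mono: "path_in A u v \<Longrightarrow> A \<subseteq> B \<Longrightarrow> path_in B u v"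
  by (induction rule: path_in_induct) (auto intro: path_in_refl path_in_step)

lemma path_in_closed:
  assumes "path_in A x s" "x \<in> T"
    and "\<And>w w'. w \<in> T \<Longrightarrow> adj w w' \<Longrightarrow> w' \<in> A \<Longrightarrow> w' \<in> T"
  shows "s \<in> T"
  using assms(1) by (induction rule: path_in_induct) (use assms(2,3) in blast)+

lemma path_in_ring:
  assumes "\<And>m. m < k \<Longrightarrow> adj (v m) (v (Suc m))" "i \<le> k" "v ` {i..k} \<subseteq> A"
  shows "path_in A (v i) (v k)"
  using assms
proof (induction k)
  case 0
  then show ?case by (simp add: path_in_refl)
next
  case (Suc k)
  show ?case
  proof (cases "i = Suc k")
    case True
    with Suc.prems show ?thesis by (simp add: path_in_refl)
  next
    case False
    with Suc.prems have "path_in A (v i) (v k)"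
      by (intro Suc.IH) auto
    then show ?thesis
      by (rule path_in_step) (use Suc.prems in auto)
  qed
qed

lemma path_in_remove_point:
  assumes "path_in A u w" "u \<noteq> p"
  shows "path_in (A - {p}) u w \<or> (\<exists>e. adj e p \<and> path_in (A - {p}) u e)"
  using assms(1)
proof (induction rule: path_in_induct)
  case base
  then show ?case using assms(2) by (simp add: path_in_refl)
next
  case (step y z)
  show ?case
  proof (cases "path_in (A - {p}) u y")
    case True
    show ?thesis
    proof (cases "z = p")
      case False
      with True step(2,3) have "path_in (A - {p}) u z" by (simp add: path_in_step)
      then show ?thesis ..
    qed (use True step(2) in blast)
  next
    case False
    with step(4) show ?thesis by blast
  qed
qed

lemma set_connected_insert:
  assumes "set_connected H" "h \<in> H" "adj h w"
  shows "set_connected (insert w H)"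
proof -
  let ?H = "insert w H"
  have in_H: "path_in ?H a b" if "a \<in> H" "b \<in> H" for a b
  proof (rule path_in_mono)
    show "path_in H a b" using assms(1) that unfolding set_connected_def by blast
  qed blast
  have from_w: "path_in ?H w b" if "b \<in> H" for b
  proof (rule path_in_trans)
    show "path_in ?H w h" using assms(2,3) by (intro path_in_adj) (auto intro: adj_sym)
    show "path_in ?H h b" using assms(2) that by (rule in_H)
  qed
  show ?thesis
    unfolding set_connected_def
  proof (intro ballI)
    fix a b assume "a \<in> ?H" "b \<in> ?H"
    then consider "a = w" "b = w" | "a = w" "b \<in> H" | "a \<in> H" "b = w" | "a \<in> H" "b \<in> H"
      by blast
    then show "path_in ?H a b"
    proof cases
      case 1
      then show ?thesis by (simp add: path_in_refl)
    next
      case 2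
      then show ?thesis by (simp add: from_w)
    next
      case 3
      then show ?thesis using path_in_sym[OF from_w[of a]] by simp
    next
      case 4
      then show ?thesis by (rule in_H)
    qed
  qed
qed

definition component :: "loc set \<Rightarrow> loc \<Rightarrow> loc set" where
  "component A u = {w. path_in A u w}"

lemma component_subset: "component A u \<subseteq> A"
  unfolding component_def using path_in_end by blast

lemma component_path_subset: "path_in A u x \<Longrightarrow> component A x \<subseteq> component A u"
  unfolding component_def using path_in_trans[of A u x] by blast

lemma component_mono: "A \<subseteq> B \<Longrightarrow> component A u \<subseteq> component B u"
  unfolding component_def using path_in_mono[of A u _ B] by blast

lemma infinite_component_path:
  assumes "path_in A u x" "infinite (component A x)"
  shows "infinite (component A u)"
  using assms(2) finite_subset[OF component_path_subset[OF assms(1)]] by blast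

lemma set_connected_component: "set_connected (component A u)"
proof -
  have from_u: "path_in (component A u) u w" if "path_in A u w" for w
    using that
  proof (induction rule: path_in_induct)
    case base
    then show ?case by (simp add: component_def path_in_refl)
  next
    case (step y z)
    from step(1-3) have "path_in A u z" by (rule path_in_step)
    then have "z \<in> component A u" by (simp add: component_def)
    with step(4,2) show ?case by (rule path_in_step)
  qed
  show ?thesis
    unfolding set_connected_def
  proof (intro ballI)
    fix a b assume "a \<in> component A u" "b \<in> component A u"
    then have "path_in A u a" "path_in A u b"
      by (simp_all add: component_def)
    then show "path_in (component A u) a b"
      by (rule path_in_trans[OF path_in_sym[OF from_u] from_u])
  qed
qed

lemma infinite_component_remove_point:
  assumes "infinite (component A p)"
  shows "\<exists>e. adj e p \<and> e \<in> A - {p} \<and> infinite (component (A - {p}) e)"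
proof -
  let ?E = "{e. adj e p}"
  have "component A p \<subseteq> insert p (\<Union>e\<in>?E. component (A - {p}) e)"
  proof
    fix w assume w: "w \<in> component A p"
    show "w \<in> insert p (\<Union>e\<in>?E. component (A - {p}) e)"
    proof (cases "w = p")
      case False
      from w have "path_in A p w" by (simp add: component_def)
      then have "path_in A w p" by (rule path_in_sym)
      moreover have "\<not> path_in (A - {p}) w p"
        using path_in_end by blast
      ultimately obtain e where "adj e p" "path_in (A - {p}) w e"
        using path_in_remove_point[of A w p p] False by blast
      moreover from path_in_sym[OF this(2)] have "w \<in> component (A - {p}) e"
        by (simp add: component_def)
      ultimately show ?thesis by blast
    qed simp
  qed
  with assms have "infinite (insert p (\<Union>e\<in>?E. component (A - {p}) e))"
    using finite_subset by blast
  then have "infinite (\<Union>e\<in>?E. component (A - {p}) e)" by simp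
  moreover have "finite ?E"
    using finite_adj[of p] by (rule rev_finite_subset) (auto intro: adj_sym)
  ultimately obtain e where "e \<in> ?E" "infinite (component (A - {p}) e)"
    using finite_UN_I by blast
  moreover from this have "e \<in> A - {p}"
    unfolding component_def path_in_def by auto
  ultimately show ?thesis by blast
qed

lemma infinite_component_transfer:
  assumes sub: "A - {p} \<subseteq> B"
    and inf_A: "\<And>u. u \<in> A \<Longrightarrow> infinite (component A u)"
    and inf_nbrs: "\<And>e. adj e p \<Longrightarrow> e \<in> A - {p} \<Longrightarrow> infinite (component B e)"
    and u: "u \<in> A" "u \<noteq> p"
  shows "infinite (component B u)"
proof (cases "\<exists>e. adj e p \<and> path_in (A - {p}) u e")
  case True
  then obtain e where e: "adj e p" "path_in (A - {p}) u e" by blast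
  from e(2) sub have "path_in B u e" by (rule path_in_mono)
  moreover have "infinite (component B e)"
    using inf_nbrs[OF e(1) path_in_end[OF e(2)]] .
  ultimately show ?thesis by (rule infinite_component_path)
next
  case False
  have "component A u \<subseteq> component B u"
  proof
    fix w assume "w \<in> component A u"
    then have "path_in A u w" by (simp add: component_def)
    with False u(2) have "path_in (A - {p}) u w"
      using path_in_remove_point by blast
    from this sub have "path_in B u w" by (rule path_in_mono)
    then show "w \<in> component B u" by (simp add: component_def)
  qed
  with inf_A[OF u(1)] show ?thesis using finite_subset by blast
qed

subsection \<open>Holes are the finite components of the complement\<close>

lemma component_is_hole:
  assumes "u \<notin> \<sigma>" "finite (component (-\<sigma>) u)"
  shows "is_hole \<sigma> (component (-\<sigma>) u)"
  unfolding is_hole_def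
proof (intro conjI allI impI)
  let ?H = "component (-\<sigma>) u"
  have u: "u \<in> ?H" using assms(1) by (simp add: component_def path_in_refl)
  then show "?H \<noteq> {}" by blast
  show "finite ?H" by (fact assms(2))
  show "?H \<inter> \<sigma> = {}" using component_subset by blast
  show "set_connected ?H" by (rule set_connected_component)
  fix H' assume H': "?H \<subseteq> H' \<and> finite H' \<and> H' \<inter> \<sigma> = {} \<and> set_connected H'"
  have "H' \<subseteq> ?H"
  proof
    fix w assume "w \<in> H'"
    with H' u have "path_in H' u w" unfolding set_connected_def by blast
    moreover have "H' \<subseteq> -\<sigma>" using H' by blast
    ultimately have "path_in (-\<sigma>) u w" by (rule path_in_mono)
    then show "w \<in> ?H" by (simp add: component_def)
  qed
  with H' show "H' = ?H" by blast
qed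

lemma is_holeD:
  assumes "is_hole \<sigma> H"
  shows "H \<noteq> {}" "finite H" "H \<inter> \<sigma> = {}" "set_connected H"
  using assms unfolding is_hole_def by simp_all

lemma is_hole_maximal:
  "is_hole \<sigma> H \<Longrightarrow> H \<subseteq> H' \<Longrightarrow> finite H' \<Longrightarrow> H' \<inter> \<sigma> = {} \<Longrightarrow> set_connected H' \<Longrightarrow> H' = H"
  unfolding is_hole_def by blast

lemma hole_eq_component:
  assumes H: "is_hole \<sigma> H" and u: "u \<in> H"
  shows "H = component (-\<sigma>) u"
proof (rule ccontr)
  note fin = is_holeD(2)[OF H] and disj = is_holeD(3)[OF H] and conn = is_holeD(4)[OF H]
  have "H \<subseteq> component (-\<sigma>) u"
  proof
    fix w assume "w \<in> H"
    with conn u have "path_in H u w" unfolding set_connected_def by blast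
    moreover have "H \<subseteq> -\<sigma>" using disj by blast
    ultimately have "path_in (-\<sigma>) u w" by (rule path_in_mono)
    then show "w \<in> component (-\<sigma>) u" by (simp add: component_def)
  qed
  moreover assume "H \<noteq> component (-\<sigma>) u"
  ultimately obtain w where "path_in (-\<sigma>) u w" "w \<notin> H"
    unfolding component_def by blast
  have "\<exists>h x. h \<in> H \<and> adj h x \<and> x \<notin> H \<and> x \<notin> \<sigma>"
  proof (rule ccontr)
    assume "\<not> ?thesis"
    then have "w \<in> H" using path_in_closed[OF \<open>path_in (-\<sigma>) u w\<close> u] by blast
    with \<open>w \<notin> H\<close> show False ..
  qed
  then obtain h x where hx: "h \<in> H" "adj h x" "x \<notin> H" "x \<notin> \<sigma>"
    by blast
  have "insert x H = H"
  proof (rule is_hole_maximal[OF H])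
    show "finite (insert x H)" using fin by simp
    show "insert x H \<inter> \<sigma> = {}" using disj hx(4) by simp
    show "set_connected (insert x H)" using conn hx(1,2) by (rule set_connected_insert)
  qed blast
  with hx(3) show False by blast
qed

lemma not_has_hole_iff:
  "\<not> has_hole \<sigma> \<longleftrightarrow> (\<forall>u. u \<notin> \<sigma> \<longrightarrow> infinite (component (-\<sigma>) u))"
proof
  assume "\<not> has_hole \<sigma>"
  then show "\<forall>u. u \<notin> \<sigma> \<longrightarrow> infinite (component (-\<sigma>) u)"
    using component_is_hole unfolding has_hole_def by blast
next
  assume inf: "\<forall>u. u \<notin> \<sigma> \<longrightarrow> infinite (component (-\<sigma>) u)"
  show "\<not> has_hole \<sigma>"
  proof
    assume "has_hole \<sigma>"
    then obtain H where H: "is_hole \<sigma> H" unfolding has_hole_def ..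
    then obtain u where u: "u \<in> H" using is_holeD(1) by blast
    have "H = component (-\<sigma>) u" using H u by (rule hole_eq_component)
    moreover have "u \<notin> \<sigma>" "finite H" using is_holeD(2,3)[OF H] u by auto
    ultimately show False using inf by auto
  qed
qed

subsection \<open>The neighbourhood of an edge\<close>

text \<open>For an edge \<open>l l'\<close>, the ring \<open>v 0, \<dots>, v 4\<close> lists the neighbours of \<open>l'\<close> other than \<open>l\<close> in
  cyclic order; its ends \<open>v 0\<close> and \<open>v 4\<close> are the two common neighbours of \<open>l\<close> and \<open>l'\<close>.\<close>

definition edge_frame :: "loc \<Rightarrow> loc \<Rightarrow> (nat \<Rightarrow> loc) \<Rightarrow> bool" where
  "edge_frame l l' v \<longleftrightarrow>
     (\<forall>w. adj l' w \<longleftrightarrow> w \<in> {l, v 0, v 1, v 2, v 3, v 4}) \<and>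
     (\<forall>w. adj l w \<and> adj l' w \<longrightarrow> w \<in> {v 0, v 4}) \<and>
     distinct [l, l', v 0, v 1, v 2, v 3, v 4] \<and>
     adj l (v 0) \<and> adj l (v 4) \<and> (\<forall>m<4. adj (v m) (v (Suc m))) \<and>
     (\<forall>m\<in>{1,2,3}. \<forall>w. adj (v m) w \<and> (adj l w \<or> adj l' w) \<longrightarrow>
        w \<in> {l, l', v (m - 1), v (m + 1)})"

lemma all_less_4: "(\<forall>m<4. P m) \<longleftrightarrow> P 0 \<and> P 1 \<and> P 2 \<and> P (3::nat)"
  by (auto simp: numeral_eq_Suc less_Suc_eq)

lemma nat_le_4_cases: "(m::nat) \<le> 4 \<Longrightarrow> m \<in> {0, 1, 2, 3, 4}"
  by auto

lemma edge_frame_exists: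
  assumes "adj l l'"
  shows "\<exists>v. edge_frame l l' v"
proof -
  obtain a b where l: "l = (a, b)" by (cases l)
  from assms consider "l' = (a+1,b)" | "l' = (a-1,b)" | "l' = (a,b+1)" | "l' = (a,b-1)"
    | "l' = (a+1,b-1)" | "l' = (a-1,b+1)"
    unfolding l adj_iff by blast
  then show ?thesis
  proof cases
    case 1
    show ?thesis unfolding l 1 edge_frame_def all_less_4
      by (rule exI[of _ "(!) [(a,b+1), (a+1,b+1), (a+2,b), (a+2,b-1), (a+1,b-1)]"])
        (simp add: adj_iff, auto simp: adj_iff)
  next
    case 2
    show ?thesis unfolding l 2 edge_frame_def all_less_4
      by (rule exI[of _ "(!) [(a,b-1), (a-1,b-1), (a-2,b), (a-2,b+1), (a-1,b+1)]"])
        (simp add: adj_iff, auto simp: adj_iff)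
  next
    case 3
    show ?thesis unfolding l 3 edge_frame_def all_less_4
      by (rule exI[of _ "(!) [(a-1,b+1), (a-1,b+2), (a,b+2), (a+1,b+1), (a+1,b)]"])
        (simp add: adj_iff, auto simp: adj_iff)
  next
    case 4
    show ?thesis unfolding l 4 edge_frame_def all_less_4
      by (rule exI[of _ "(!) [(a+1,b-1), (a+1,b-2), (a,b-2), (a-1,b-1), (a-1,b)]"])
        (simp add: adj_iff, auto simp: adj_iff)
  next
    case 5
    show ?thesis unfolding l 5 edge_frame_def all_less_4
      by (rule exI[of _ "(!) [(a+1,b), (a+2,b-1), (a+2,b-2), (a+1,b-2), (a,b-1)]"])
        (simp add: adj_iff, auto simp: adj_iff)
  next
    case 6
    show ?thesis unfolding l 6 edge_frame_def all_less_4
      by (rule exI[of _ "(!) [(a-1,b), (a-2,b+1), (a-2,b+2), (a-1,b+2), (a,b+1)]"])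
        (simp add: adj_iff, auto simp: adj_iff)
  qed
qed

context
  fixes l l' :: loc and v :: "nat \<Rightarrow> loc"
  assumes frame: "edge_frame l l' v"
begin

lemma frame_nbrs: "adj l' w \<longleftrightarrow> w \<in> {l, v 0, v 1, v 2, v 3, v 4}"
  using frame unfolding edge_frame_def by blast

lemma frame_common_nbr: "adj l s \<Longrightarrow> adj l' s \<Longrightarrow> s = v 0 \<or> s = v 4"
  using frame unfolding edge_frame_def by blast

lemma frame_distinct: "distinct [l, l', v 0, v 1, v 2, v 3, v 4]"
  using frame unfolding edge_frame_def by blast

lemma frame_ring_ends: "adj l (v 0)" "adj l (v 4)"
  using frame unfolding edge_frame_def by blast+

lemma ring_adj: "m < 4 \<Longrightarrow> adj (v m) (v (Suc m))"
  using frame unfolding edge_frame_def by blast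

lemma ring_inner_nbrs:
  assumes "m \<in> {1, 2, 3}" "adj (v m) w" "adj l w \<or> adj l' w" "w \<noteq> l" "w \<noteq> l'"
  shows "w = v (m - 1) \<or> w = v (m + 1)"
  using frame assms unfolding edge_frame_def by blast

lemma ring_ne_edge: "m \<le> 4 \<Longrightarrow> v m \<noteq> l \<and> v m \<noteq> l'"
  using frame_distinct nat_le_4_cases[of m] by auto

lemma ring_inj: "m \<le> 4 \<Longrightarrow> m' \<le> 4 \<Longrightarrow> v m = v m' \<Longrightarrow> m = m'"
  using frame_distinct nat_le_4_cases[of m] nat_le_4_cases[of m'] by auto

lemma ring_adj_centre: "m \<le> 4 \<Longrightarrow> adj l' (v m)"
  using frame_nbrs nat_le_4_cases[of m] by auto

lemma ring_covers_nbrs: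
  assumes "adj l' w" "w \<noteq> l"
  obtains m where "m \<le> 4" "w = v m"
proof -
  have "w \<in> {v 0, v 1, v 2, v 3, v 4}" using assms frame_nbrs by blast
  then show ?thesis using that[of 0] that[of 1] that[of 2] that[of 3] that[of 4] by auto
qed

text \<open>An occupied ring vertex between two empty ones is trapped: within \<open>N(l \<union> l')\<close> it only
  reaches its ring neighbours, so its occupied stretch of the ring never meets \<open>v 0\<close> or \<open>v 4\<close>.\<close>

lemma property1_ring_no_gap:
  assumes P: "property1 \<sigma> l l'" and ijk: "i < j" "j < k" "k \<le> 4"
    and empty: "v i \<notin> \<sigma>" "v k \<notin> \<sigma>"
  shows "v j \<notin> \<sigma>"
proof
  assume "v j \<in> \<sigma>"
  then have "v j \<in> nbrs2 \<sigma> l l'"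
    using ijk ring_adj_centre[of j] ring_ne_edge[of j] by (auto simp: nbrs2_def nbrs_def)
  then obtain s where s: "s \<in> common_nbrs \<sigma> l l'" "path_in (nbrs2 \<sigma> l l') (v j) s"
    using P unfolding property1_def by blast
  have "s \<in> v ` {i<..<k}"
  proof (rule path_in_closed[OF s(2)])
    show "v j \<in> v ` {i<..<k}" using ijk by auto
  next
    fix w w' assume "w \<in> v ` {i<..<k}" "adj w w'" and w': "w' \<in> nbrs2 \<sigma> l l'"
    then obtain m where m: "i < m" "m < k" "adj (v m) w'" by auto
    have "m \<in> {1, 2, 3}" using m ijk by auto
    moreover have "adj l w' \<or> adj l' w'" "w' \<noteq> l" "w' \<noteq> l'"
      using w' by (auto simp: nbrs2_def nbrs_def)
    ultimately have "w' = v (m - 1) \<or> w' = v (m + 1)"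
      using m(3) ring_inner_nbrs by blast
    moreover have "w' \<noteq> v i" "w' \<noteq> v k" using w' empty by (auto simp: nbrs2_def nbrs_def)
    ultimately show "w' \<in> v ` {i<..<k}"
    proof (elim disjE)
      assume w'_eq: "w' = v (m - 1)"
      with \<open>w' \<noteq> v i\<close> have "m - 1 \<noteq> i" by auto
      with m w'_eq show ?thesis by (intro image_eqI[of _ _ "m - 1"]) auto
    next
      assume w'_eq: "w' = v (m + 1)"
      with \<open>w' \<noteq> v k\<close> have "m + 1 \<noteq> k" by auto
      with m w'_eq show ?thesis by (intro image_eqI[of _ _ "m + 1"]) auto
    qed
  qed
  then obtain m where m: "i < m" "m < k" "s = v m" by auto
  moreover have "s = v 0 \<or> s = v 4"
    using s(1) frame_common_nbr by (auto simp: common_nbrs_def nbrs_def)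
  ultimately show False
    using ijk ring_inj[of m 0] ring_inj[of m 4] by auto
qed

lemma property2_ring_ends_empty:
  assumes "property2 \<sigma> l l'"
  shows "v 0 \<notin> \<sigma>" "v 4 \<notin> \<sigma>"
proof -
  have "finite (common_nbrs \<sigma> l l')"
    by (rule rev_finite_subset[OF finite_adj[of l]]) (auto simp: common_nbrs_def nbrs_def)
  then have "common_nbrs \<sigma> l l' = {}"
    using assms unfolding property2_def by simp
  then show "v 0 \<notin> \<sigma>" "v 4 \<notin> \<sigma>"
    using frame_ring_ends ring_adj_centre[of 0] ring_adj_centre[of 4]
    by (auto simp: common_nbrs_def nbrs_def)
qed

lemma property2_ring_middle:
  assumes P: "property2 \<sigma> l l'" and occupied: "v 1 \<in> \<sigma>" "v 3 \<in> \<sigma>"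
  shows "v 2 \<in> \<sigma>"
proof (rule ccontr)
  assume v2: "v 2 \<notin> \<sigma>"
  let ?N = "nbrs \<sigma> l' - {l}"
  have "v 1 \<in> ?N" "v 3 \<in> ?N"
    using occupied ring_adj_centre[of 1] ring_adj_centre[of 3] ring_ne_edge[of 1] ring_ne_edge[of 3]
    by (auto simp: nbrs_def)
  then have p: "path_in ?N (v 1) (v 3)"
    using P unfolding property2_def set_connected_def by blast
  have "v 3 \<in> {v 1}"
  proof (rule path_in_closed[OF p])
    fix w w' assume "w \<in> {v 1}" "adj w w'" and w': "w' \<in> ?N"
    then have "adj (v 1) w'" by simp
    moreover have "adj l w' \<or> adj l' w'" "w' \<noteq> l" "w' \<noteq> l'"
      using w' adj_irrefl[of l'] by (auto simp: nbrs_def)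
    ultimately have "w' = v (1 - 1) \<or> w' = v (1 + 1)"
      using ring_inner_nbrs[of 1 w'] by blast
    then have "w' = v 0 \<or> w' = v 2" by (simp add: numeral_2_eq_2)
    with w' v2 property2_ring_ends_empty[OF P] show "w' \<in> {v 1}" by (auto simp: nbrs_def)
  qed simp
  then show False using ring_inj[of 3 1] by simp
qed

lemma ring_path_after_move:
  assumes "i \<le> k" "k \<le> 4" "\<forall>m\<in>{i..k}. v m \<notin> \<sigma>"
  shows "path_in (- insert l' (\<sigma> - {l})) (v i) (v k)"
proof (rule path_in_ring[of k v i])
  show "adj (v m) (v (Suc m))" if "m < k" for m
    using ring_adj that assms(2) by simp
  show "v ` {i..k} \<subseteq> - insert l' (\<sigma> - {l})"
  proof
    fix x assume "x \<in> v ` {i..k}"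
    then obtain m where m: "m \<in> {i..k}" "x = v m" by blast
    with assms(2,3) have "v m \<notin> \<sigma>" "v m \<noteq> l'" using ring_ne_edge[of m] by auto
    with m(2) show "x \<in> - insert l' (\<sigma> - {l})" by simp
  qed
qed (fact assms(1))

lemma property1_ring_path:
  assumes P: "property1 \<sigma> l l'" and "i \<le> 4" "k \<le> 4" "v i \<notin> \<sigma>" "v k \<notin> \<sigma>"
  shows "path_in (- insert l' (\<sigma> - {l})) (v i) (v k)"
proof -
  have conn: "path_in (- insert l' (\<sigma> - {l})) (v a) (v b)"
    if "a \<le> b" "b \<le> 4" "v a \<notin> \<sigma>" "v b \<notin> \<sigma>" for a b
  proof (rule ring_path_after_move[OF that(1,2)], intro ballI)
    fix m assume "m \<in> {a..b}"
    then consider "m = a" | "m = b" | "a < m" "m < b" by fastforce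
    then show "v m \<notin> \<sigma>"
      by cases (use that property1_ring_no_gap[OF P, of a m b] in auto)
  qed
  show ?thesis
  proof (cases "i \<le> k")
    case True
    then show ?thesis by (rule conn) (use assms in simp_all)
  next
    case False
    then have "path_in (- insert l' (\<sigma> - {l})) (v k) (v i)"
      by (intro conn) (use assms in simp_all)
    then show ?thesis by (rule path_in_sym)
  qed
qed

lemma property2_ring_path_to_vacated:
  assumes P: "property2 \<sigma> l l'" and m: "m \<le> 4" "v m \<notin> \<sigma>"
  shows "path_in (- insert l' (\<sigma> - {l})) (v m) l"
proof -
  let ?A = "- insert l' (\<sigma> - {l})"
  note ends = property2_ring_ends_empty[OF P]
  have "l \<in> ?A" "v 0 \<in> ?A" "v 4 \<in> ?A"
    using frame_distinct ends ring_ne_edge[of 0] ring_ne_edge[of 4] by auto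
  then have to_l: "path_in ?A (v 0) l" "path_in ?A (v 4) l"
    using adj_sym[OF frame_ring_ends(1)] adj_sym[OF frame_ring_ends(2)]
    by (simp_all add: path_in_adj)
  have "(\<forall>j\<in>{0..m}. v j \<notin> \<sigma>) \<or> (\<forall>j\<in>{m..4}. v j \<notin> \<sigma>)"
  proof (rule ccontr)
    assume "\<not> ?thesis"
    then obtain j j' where j: "j \<le> m" "v j \<in> \<sigma>" and j': "m \<le> j'" "j' \<le> 4" "v j' \<in> \<sigma>"
      by auto
    have "j \<noteq> 0" using j(2) ends(1) by metis
    moreover have "j \<noteq> m" using j(2) m(2) by metis
    moreover have "j' \<noteq> m" using j'(3) m(2) by metis
    moreover have "j' \<noteq> 4" using j'(3) ends(2) by metis
    ultimately have "j = 1" "m = 2" "j' = 3" using j(1) j'(1,2) by arith+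
    then show False
      using property2_ring_middle[OF P] j j' m by simp
  qed
  then show ?thesis
  proof
    assume "\<forall>j\<in>{0..m}. v j \<notin> \<sigma>"
    then have "path_in ?A (v 0) (v m)" using m by (intro ring_path_after_move) auto
    from path_in_sym[OF this] to_l(1) show ?thesis by (rule path_in_trans)
  next
    assume "\<forall>j\<in>{m..4}. v j \<notin> \<sigma>"
    then have "path_in ?A (v m) (v 4)" using m by (intro ring_path_after_move) auto
    from this to_l(2) show ?thesis by (rule path_in_trans)
  qed
qed

end

lemma empty_nbrs_connected_after_move:
  assumes l: "l \<in> \<sigma>" "adj l l'" and P: "property1 \<sigma> l l' \<or> property2 \<sigma> l l'"
    and e: "adj l' e" "e \<notin> \<sigma>" and e': "adj l' e'" "e' \<notin> \<sigma>"
  shows "path_in (- insert l' (\<sigma> - {l})) e e'"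
proof -
  obtain v where frame: "edge_frame l l' v"
    using edge_frame_exists l(2) by blast
  obtain i where i: "i \<le> 4" "e = v i"
    using ring_covers_nbrs[OF frame e(1)] e(2) l(1) by blast
  obtain k where k: "k \<le> 4" "e' = v k"
    using ring_covers_nbrs[OF frame e'(1)] e'(2) l(1) by blast
  from P show ?thesis
  proof
    assume "property1 \<sigma> l l'"
    with frame i k e(2) e'(2) show ?thesis by (simp add: property1_ring_path)
  next
    assume "property2 \<sigma> l l'"
    with frame i k e(2) e'(2)
    have "path_in (- insert l' (\<sigma> - {l})) e l" "path_in (- insert l' (\<sigma> - {l})) e' l"
      by (simp_all add: property2_ring_path_to_vacated)
    from path_in_trans[OF this(1) path_in_sym[OF this(2)]] show ?thesis .
  qed
qed

lemma move_preserves_no_hole: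
  assumes "move lam \<sigma> \<sigma>'" "\<not> has_hole \<sigma>"
  shows "\<not> has_hole \<sigma>'"
proof -
  obtain l l' where l: "l \<in> \<sigma>" "adj l l'" "l' \<notin> \<sigma>" "card (nbrs \<sigma> l) \<noteq> 5"
    "property1 \<sigma> l l' \<or> property2 \<sigma> l l'" and \<sigma>': "\<sigma>' = insert l' (\<sigma> - {l})"
    using assms(1) unfolding move_def by blast
  have old: "infinite (component (-\<sigma>) u)" if "u \<notin> \<sigma>" for u
    using assms(2) that unfolding not_has_hole_iff by blast
  have avoid_l': "- \<sigma> - {l'} \<subseteq> - \<sigma>'" using \<sigma>' by auto
  obtain e where e: "adj e l'" "e \<notin> \<sigma>" "infinite (component (- \<sigma> - {l'}) e)"
    using infinite_component_remove_point[OF old[OF l(3)]] by blast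
  have "infinite (component (-\<sigma>') e)"
    using e(3) finite_subset[OF component_mono[OF avoid_l']] by blast
  then have nbrs_l': "infinite (component (-\<sigma>') e')" if "adj l' e'" "e' \<notin> \<sigma>" for e'
  proof (rule infinite_component_path[rotated])
    show "path_in (-\<sigma>') e' e"
      using empty_nbrs_connected_after_move[OF l(1,2) l(5) that adj_sym[OF e(1)] e(2)] \<sigma>'
      by simp
  qed
  have empty: "infinite (component (-\<sigma>') u)" if "u \<notin> \<sigma>" "u \<noteq> l'" for u
  proof (rule infinite_component_transfer[OF avoid_l'])
    show "infinite (component (-\<sigma>) x)" if "x \<in> -\<sigma>" for x
      using old that by simp
    show "infinite (component (-\<sigma>') e')" if "adj e' l'" "e' \<in> -\<sigma> - {l'}" for e'
      using nbrs_l'[OF adj_sym[OF that(1)]] that(2) by simp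
  qed (use that in simp_all)
  obtain g where g: "adj l g" "g \<noteq> l'" "g \<notin> \<sigma>"
    using empty_nbr_if_card_nbrs_ne_5 l(2-4) by blast
  have "l \<notin> \<sigma>'" using \<sigma>' l(2) adj_irrefl[of l] by auto
  then have "path_in (-\<sigma>') l g" using g \<sigma>' by (intro path_in_adj) auto
  then have inf_l: "infinite (component (-\<sigma>') l)"
    using empty[OF g(3,2)] by (rule infinite_component_path)
  have "infinite (component (-\<sigma>') u)" if "u \<notin> \<sigma>'" for u
  proof (cases "u = l")
    case True
    with inf_l show ?thesis by simp
  next
    case False
    with that \<sigma>' show ?thesis by (intro empty) auto
  qed
  then show ?thesis unfolding not_has_hole_iff by blast
qed

theorem lemma5:
  fixes lam :: real and \<sigma>0 \<sigma> :: "loc set"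
  assumes "lam > 0"
    and "finite \<sigma>0"
    and "set_connected \<sigma>0"
    and "\<not> has_hole \<sigma>0"
    and "(move lam)\<^sup>*\<^sup>* \<sigma>0 \<sigma>"
  shows "\<not> has_hole \<sigma>"
  using assms(5,4)
  by (induction rule: rtranclp_induct) (use move_preserves_no_hole in blast)+

end
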